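(* Let $\Omega=\{1,\dots,n\}$ and $f:2^{\Omega}\to\mathbb{R}$. Define $f_1,f_2:2^{\Omega}\to\mathbb{R}$ by $f_1(\mathcal{S})=f(\mathcal{S}^c)$ and $f_2(\mathcal{S})=f(\mathcal{S})+f(\mathcal{S}^c)-f(\Omega)$, where $\mathcal{S}^c=\Omega\setminus\mathcal{S}$. For $\mathcal{A}\subseteq\Omega$ define $f_{\mathcal{A}}:2^{\Omega\setminus\mathcal{A}}\to\mathbb{R}$ by $f_{\mathcal{A}}(\mathcal{S})=f(\mathcal{A}\cup\mathcal{S})$. For a positive integer $q$ dividing $n$, let $\Omega(q)=\{1,\dots,n/q\}$, $\mathcal{S}(i)=\{(i-1)q+1,\dots,iq\}$ for $i\in\Omega(q)$, and $f_q:2^{\Omega(q)}\to\mathbb{R}$, $f_q(\mathcal{S})=f(\bigcup_{i\in\mathcal{S}}\mathcal{S}(i))$. Let $g:2^{\Omega}\to\mathbb{R}$ be modular and define $f\circledast g(\mathcal{S})=\min_{\mathcal{Z}\subseteq\mathcal{S}} f(\mathcal{Z})+g(\mathcal{S}\setminus\mathcal{Z})$. Then (i) $\mathcal{E}[f]=\mathcal{E}[f_1]$; (ii) $2\mathcal{E}[f]\ge\mathcal{E}[f_2]$; (iii) $\mathcal{E}[f]\ge\mathcal{E}[f_{\mathcal{A}}]$; (iv) $\mathcal{E}[f]\ge\mathcal{E}[f_q]$; (v) $\mathcal{E}[f]\ge\mathcal{E}[f\circledast g]$.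
   Context: For a set function $h$ on a finite ground set $V$, $\mathcal{E}[h]=\max_{\mathcal{A},\mathcal{B}\subseteq V} h(\mathcal{A}\cup\mathcal{B})+h(\mathcal{A}\cap\mathcal{B})-h(\mathcal{A})-h(\mathcal{B})$ (the maximum is taken over subsets of the ground set of $h$). A set function $g$ is modular if both $g$ and $-g$ are submodular. *)

theory Defs
  imports "HOL-Analysis.Analysis"
begin

(* Set functions on a finite ground set V are modelled as functions nat set \<Rightarrow> real;
   only their values on subsets of V matter. *)

definition Eg :: "nat set \<Rightarrow> (nat set \<Rightarrow> real) \<Rightarrow> real" where
  "Eg V h = Max {h (A \<union> B) + h (A \<inter> B) - h A - h B | A B. A \<subseteq> V \<and> B \<subseteq> V}"

definition submodular_on :: "nat set \<Rightarrow> (nat set \<Rightarrow> real) \<Rightarrow> bool" where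
  "submodular_on V h \<longleftrightarrow>
     (\<forall>A B. A \<subseteq> V \<longrightarrow> B \<subseteq> V \<longrightarrow> h (A \<union> B) + h (A \<inter> B) \<le> h A + h B)"

definition modular_on :: "nat set \<Rightarrow> (nat set \<Rightarrow> real) \<Rightarrow> bool" where
  "modular_on V g \<longleftrightarrow> submodular_on V g \<and> submodular_on V (\<lambda>S. - g S)"

definition conv_min :: "(nat set \<Rightarrow> real) \<Rightarrow> (nat set \<Rightarrow> real) \<Rightarrow> nat set \<Rightarrow> real" where
  "conv_min f g S = Min {f Z + g (S - Z) | Z. Z \<subseteq> S}"

definition block :: "nat \<Rightarrow> nat \<Rightarrow> nat set" where
  "block q i = {(i - 1) * q + 1 .. i * q}"

end

theory Submission
  imports Defs
begin

(* All five inequalities say that the submodularity defect of the new function at A, B is a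
   defect of f (or a sum of two defects) at sets built from A and B.  For (i), (iii) and (iv)
   the new function is f composed with a map into subsets of \<Omega> that preserves or swaps unions
   and intersections: complementation, S \<mapsto> A \<union> S, and S \<mapsto> union of the disjoint blocks.
   For (ii) the defect of f_2 is the sum of the defects of f and f_1.  For (v), choose optimal
   splittings Z_A, Z_B of A and B; Z_A \<union> Z_B and Z_A \<inter> Z_B are admissible splittings of A \<union> B
   and A \<inter> B, and modularity of g makes all g-terms cancel, leaving a defect of f. *)

lemma Eg_eq_Max_image:
  "Eg V h = Max ((\<lambda>(A, B). h (A \<union> B) + h (A \<inter> B) - h A - h B) ` (Pow V \<times> Pow V))"
  unfolding Eg_def by (rule arg_cong[where f = Max]) auto

lemma Eg_upper:
  assumes "finite V" "A \<subseteq> V" "B \<subseteq> V"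
  shows "h (A \<union> B) + h (A \<inter> B) - h A - h B \<le> Eg V h"
  unfolding Eg_eq_Max_image using assms
  by (intro Max_ge) (auto intro: image_eqI[of _ _ "(A, B)"])

lemma Eg_leI:
  assumes "finite V"
    and "\<And>A B. A \<subseteq> V \<Longrightarrow> B \<subseteq> V \<Longrightarrow> h (A \<union> B) + h (A \<inter> B) - h A - h B \<le> c"
  shows "Eg V h \<le> c"
  unfolding Eg_eq_Max_image using assms by (subst Max_le_iff) auto

lemma Eg_cong:
  assumes "\<And>S. S \<subseteq> V \<Longrightarrow> h S = h' S"
  shows "Eg V h = Eg V h'"
proof -
  have "\<And>A B. A \<subseteq> V \<Longrightarrow> B \<subseteq> V \<Longrightarrow>
      h (A \<union> B) + h (A \<inter> B) - h A - h B = h' (A \<union> B) + h' (A \<inter> B) - h' A - h' B"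
    by (simp add: assms le_infI1)
  then show ?thesis
    unfolding Eg_eq_Max_image by (intro arg_cong[where f = Max] image_cong) auto
qed

lemma Eg_comp_le:
  assumes "finite V" "finite W"
    and into: "\<And>S. S \<subseteq> W \<Longrightarrow> \<phi> S \<subseteq> V"
    and Un: "\<And>S T. S \<subseteq> W \<Longrightarrow> T \<subseteq> W \<Longrightarrow> \<phi> (S \<union> T) = \<phi> S \<union> \<phi> T"
    and Int: "\<And>S T. S \<subseteq> W \<Longrightarrow> T \<subseteq> W \<Longrightarrow> \<phi> (S \<inter> T) = \<phi> S \<inter> \<phi> T"
  shows "Eg W (\<lambda>S. f (\<phi> S)) \<le> Eg V f"
proof (rule Eg_leI[OF \<open>finite W\<close>])
  fix S T assume "S \<subseteq> W" "T \<subseteq> W"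
  then show "f (\<phi> (S \<union> T)) + f (\<phi> (S \<inter> T)) - f (\<phi> S) - f (\<phi> T) \<le> Eg V f"
    using Eg_upper[OF \<open>finite V\<close> into into] by (simp add: Un Int)
qed

lemma Eg_compl_le:
  assumes "finite V"
  shows "Eg V (\<lambda>S. f (V - S)) \<le> Eg V f"
proof (rule Eg_leI[OF assms])
  fix A B assume "A \<subseteq> V" "B \<subseteq> V"
  have "f ((V - A) \<union> (V - B)) + f ((V - A) \<inter> (V - B)) - f (V - A) - f (V - B) \<le> Eg V f"
    using assms by (intro Eg_upper) auto
  then show "f (V - (A \<union> B)) + f (V - (A \<inter> B)) - f (V - A) - f (V - B) \<le> Eg V f"
    by (simp add: Diff_Un Diff_Int)
qed

lemma Eg_compl:
  assumes "finite V"
  shows "Eg V (\<lambda>S. f (V - S)) = Eg V f"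
proof -
  have "Eg V f = Eg V (\<lambda>S. f (V - (V - S)))"
    by (rule Eg_cong) (simp add: double_diff)
  also have "\<dots> \<le> Eg V (\<lambda>S. f (V - S))"
    by (rule Eg_compl_le[OF assms])
  finally show ?thesis
    using Eg_compl_le[OF assms, of f] by linarith
qed

lemma Eg_add_le:
  assumes "finite V"
  shows "Eg V (\<lambda>S. h S + k S + c) \<le> Eg V h + Eg V k"
proof (rule Eg_leI[OF assms])
  fix A B assume "A \<subseteq> V" "B \<subseteq> V"
  then show "(h (A \<union> B) + k (A \<union> B) + c) + (h (A \<inter> B) + k (A \<inter> B) + c)
      - (h A + k A + c) - (h B + k B + c) \<le> Eg V h + Eg V k"
    using Eg_upper[OF assms, of A B h] Eg_upper[OF assms, of A B k] by linarith
qed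

lemma UN_Int_disjoint_family:
  assumes "disjoint_family B"
  shows "(\<Union>i\<in>S \<inter> T. B i) = (\<Union>i\<in>S. B i) \<inter> (\<Union>i\<in>T. B i)"
proof (intro equalityI subsetI)
  fix x assume "x \<in> (\<Union>i\<in>S. B i) \<inter> (\<Union>i\<in>T. B i)"
  then obtain i j where "i \<in> S" "j \<in> T" "x \<in> B i" "x \<in> B j" by blast
  moreover from this have "i = j"
    using assms unfolding disjoint_family_on_def by blast
  ultimately show "x \<in> (\<Union>i\<in>S \<inter> T. B i)" by blast
qed blast
lemma block_disjoint_less:
  assumes "i < j"
  shows "block q i \<inter> block q j = {}"
proof (rule ccontr)
  assume "block q i \<inter> block q j \<noteq> {}"
  then obtain x where "x \<le> i * q" "(j - 1) * q + 1 \<le> x"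
    unfolding block_def by auto
  moreover have "i * q \<le> (j - 1) * q" using assms by (intro mult_le_mono1) simp
  ultimately show False by linarith
qed

lemma disjoint_family_block: "disjoint_family (block q)"
  unfolding disjoint_family_on_def
  by (metis Int_commute block_disjoint_less linorder_neqE_nat)
lemma UN_block_subset_atLeastAtMost:
  assumes "S \<subseteq> {1..n div q}"
  shows "(\<Union>i\<in>S. block q i) \<subseteq> {1..n}"
proof (rule UN_least)
  fix i assume "i \<in> S"
  then have "i * q \<le> n div q * q" using assms by (intro mult_le_mono1) auto
  also have "\<dots> \<le> n" by (rule div_times_less_eq_dividend)
  finally show "block q i \<subseteq> {1..n}" unfolding block_def by auto
qed

lemma modular_on_eq:
  assumes "modular_on V g" "A \<subseteq> V" "B \<subseteq> V"
  shows "g (A \<union> B) + g (A \<inter> B) = g A + g B"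
proof -
  have "g (A \<union> B) + g (A \<inter> B) \<le> g A + g B" "- g (A \<union> B) + - g (A \<inter> B) \<le> - g A + - g B"
    using assms unfolding modular_on_def submodular_on_def by blast+
  then show ?thesis by linarith
qed

lemma modular_on_Diff:
  assumes "modular_on V g" "Z \<subseteq> S" "S \<subseteq> V"
  shows "g (S - Z) = g S - g Z + g {}"
proof -
  have "g (Z \<union> (S - Z)) + g (Z \<inter> (S - Z)) = g Z + g (S - Z)"
    using assms by (intro modular_on_eq[OF assms(1)]) auto
  moreover have "Z \<union> (S - Z) = S" "Z \<inter> (S - Z) = {}" using assms by auto
  ultimately show ?thesis by simp
qed

lemma conv_min_image: "conv_min f g S = Min ((\<lambda>Z. f Z + g (S - Z)) ` Pow S)"
  unfolding conv_min_def by (rule arg_cong[where f = Min]) auto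

lemma conv_min_le:
  assumes "finite S" "Z \<subseteq> S"
  shows "conv_min f g S \<le> f Z + g (S - Z)"
  unfolding conv_min_image using assms by (intro Min_le) auto

lemma conv_min_attained:
  assumes "finite S"
  obtains Z where "Z \<subseteq> S" "conv_min f g S = f Z + g (S - Z)"
proof -
  have "conv_min f g S \<in> (\<lambda>Z. f Z + g (S - Z)) ` Pow S"
    unfolding conv_min_image using assms by (intro Min_in) auto
  then show ?thesis using that by auto
qed

lemma Eg_conv_min_le:
  assumes "finite V" "modular_on V g"
  shows "Eg V (conv_min f g) \<le> Eg V f"
proof (rule Eg_leI[OF assms(1)])
  fix A B assume AB: "A \<subseteq> V" "B \<subseteq> V"
  then have fin: "finite A" "finite B" using assms(1) finite_subset by auto
  obtain ZA where ZA: "ZA \<subseteq> A" "conv_min f g A = f ZA + g (A - ZA)"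
    using conv_min_attained[OF fin(1)] .
  obtain ZB where ZB: "ZB \<subseteq> B" "conv_min f g B = f ZB + g (B - ZB)"
    using conv_min_attained[OF fin(2)] .
  have sub: "ZA \<subseteq> V" "ZB \<subseteq> V" using ZA ZB AB by auto
  have "conv_min f g (A \<union> B) \<le> f (ZA \<union> ZB) + g ((A \<union> B) - (ZA \<union> ZB))"
    using fin ZA ZB by (intro conv_min_le) auto
  moreover have "conv_min f g (A \<inter> B) \<le> f (ZA \<inter> ZB) + g ((A \<inter> B) - (ZA \<inter> ZB))"
    using fin ZA ZB by (intro conv_min_le) auto
  moreover have "f (ZA \<union> ZB) + f (ZA \<inter> ZB) - f ZA - f ZB \<le> Eg V f"
    using Eg_upper[OF assms(1) sub] .
  moreover have
    "g ((A \<union> B) - (ZA \<union> ZB)) = g (A \<union> B) - g (ZA \<union> ZB) + g {}"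
    "g ((A \<inter> B) - (ZA \<inter> ZB)) = g (A \<inter> B) - g (ZA \<inter> ZB) + g {}"
    "g (A - ZA) = g A - g ZA + g {}" "g (B - ZB) = g B - g ZB + g {}"
    using ZA ZB AB by (auto intro!: modular_on_Diff[OF assms(2)])
  moreover have "g (A \<union> B) + g (A \<inter> B) = g A + g B" "g (ZA \<union> ZB) + g (ZA \<inter> ZB) = g ZA + g ZB"
    using AB sub by (auto intro!: modular_on_eq[OF assms(2)])
  ultimately show "conv_min f g (A \<union> B) + conv_min f g (A \<inter> B)
      - conv_min f g A - conv_min f g B \<le> Eg V f"
    using ZA(2) ZB(2) by linarith
qed

theorem mainTheorem3:
  fixes n :: nat and f :: "nat set \<Rightarrow> real"
  defines "\<Omega> \<equiv> {1..n}"
  shows "Eg \<Omega> f = Eg \<Omega> (\<lambda>S. f (\<Omega> - S))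
    \<and> 2 * Eg \<Omega> f \<ge> Eg \<Omega> (\<lambda>S. f S + f (\<Omega> - S) - f \<Omega>)
    \<and> (\<forall>A. A \<subseteq> \<Omega> \<longrightarrow> Eg \<Omega> f \<ge> Eg (\<Omega> - A) (\<lambda>S. f (A \<union> S)))
    \<and> (\<forall>q::nat. 0 < q \<longrightarrow> q dvd n \<longrightarrow>
         Eg \<Omega> f \<ge> Eg {1..n div q} (\<lambda>S. f (\<Union>i\<in>S. block q i)))
    \<and> (\<forall>g. modular_on \<Omega> g \<longrightarrow> Eg \<Omega> f \<ge> Eg \<Omega> (conv_min f g))"
proof -
  have fin: "finite \<Omega>" unfolding \<Omega>_def by simp
  have compl: "Eg \<Omega> (\<lambda>S. f (\<Omega> - S)) = Eg \<Omega> f"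
    using Eg_compl[OF fin] .
  have "Eg \<Omega> (\<lambda>S. f S + f (\<Omega> - S) - f \<Omega>) \<le> 2 * Eg \<Omega> f"
    using Eg_add_le[OF fin, of f "\<lambda>S. f (\<Omega> - S)" "- f \<Omega>"] compl by simp
  moreover have "Eg (\<Omega> - A) (\<lambda>S. f (A \<union> S)) \<le> Eg \<Omega> f" if "A \<subseteq> \<Omega>" for A
    using fin that by (intro Eg_comp_le) auto
  \<comment> \<open>holds for every q: the blocks are always disjoint and lie in \<Omega> since (n div q) * q \<le> n\<close>
  moreover have "Eg {1..n div q} (\<lambda>S. f (\<Union>i\<in>S. block q i)) \<le> Eg \<Omega> f" for q
    using fin UN_block_subset_atLeastAtMost[of _ n q]
    by (intro Eg_comp_le) (auto simp: \<Omega>_def UN_Int_disjoint_family[OF disjoint_family_block])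
  moreover have "Eg \<Omega> (conv_min f g) \<le> Eg \<Omega> f" if "modular_on \<Omega> g" for g
    using Eg_conv_min_le[OF fin that] .
  ultimately show ?thesis using compl by auto
qed

end
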